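(* Let $A$ be a finite set and let $(v_{xy})$ be a Llull matrix on $A$ with CLC structure, and let $\xi$ be any admissible order for it. (1) Suppose $t_{xy}>0$ for all distinct $x,y\in A$, and let $q_{xy}=v_{xy}/t_{xy}$. Then $q_{xy}\ge q_{yx}$ whenever $x<_\xi y$, and $q_{xz}\ge q_{yz}$ and $q_{zx}\le q_{zy}$ whenever $x<_\xi y$ and $z\notin\{x,y\}$. Moreover, the top dominant irreducible component $X$ of $A$ for $(v_{xy})$ is also a top dominant irreducible component of $A$ for $(q_{xy})$, and $q_{xy}>0$ whenever $x\in X$ and $y\neq x$. (2) Suppose $t_{xy}=0$ for some distinct $x,y\in A$. Then there exists $Y\subseteq A$ such that $t_{x\bar x}>0$ for all distinct $x,\bar x\notin Y$, and $v_{yx}=0$ for all $y\in Y$ and all $x\neq y$.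
   Context: A Llull matrix on a finite set $A$ is an assignment to each ordered pair of distinct elements $x\neq y$ of $A$ of a number $v_{xy}\in[0,1]$ such that $v_{xy}+v_{yx}\le 1$. Turnouts: $t_{xy}=v_{xy}+v_{yx}$; margins: $m_{xy}=v_{xy}-v_{yx}$. The matrix has CLC structure if there is a total order $\xi$ on $A$ (an admissible order) such that, writing $x<_\xi y$ when $x$ precedes $y$ and $x'$ for the immediate successor of $x$ in $\xi$ (when it exists): (i) $v_{xy}\ge v_{yx}$ whenever $x<_\xi y$; (ii) $v_{xz}=\max(v_{xy},v_{yz})$ whenever $x<_\xi y<_\xi z$; (iii) $v_{zx}=\min(v_{zy},v_{yx})$ whenever $x<_\xi y<_\xi z$; (iv) $0\le t_{xz}-t_{x'z}\le m_{xx'}$ whenever $x'$ exists and $z\notin\{x,x'\}$. For any Llull matrix $(w_{xy})$: indirect scores $\hat w_{xy}=\max$ over paths $x=x_0,\dots,x_n=y$ of $\min_i w_{x_ix_{i+1}}$; irreducible components are classes of $x\sim y$ iff $x=y$ or ($\hat w_{xy}>0$ and $\hat w_{yx}>0$); $x$ dominates $y$ iff $\hat w_{xy}>0$ and $\hat w_{yx}=0$, which passes to components; a top dominant irreducible component is one dominating every other component. A non-vanishing Llull matrix with CLC structure has a (unique) top dominant irreducible component. *)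

theory Defs
  imports Complex_Main
begin

definition llull :: "'a set \<Rightarrow> ('a \<Rightarrow> 'a \<Rightarrow> real) \<Rightarrow> bool" where
  "llull A v \<longleftrightarrow> (\<forall>x\<in>A. \<forall>y\<in>A. x \<noteq> y \<longrightarrow>
      0 \<le> v x y \<and> v x y \<le> 1 \<and> v x y + v y x \<le> 1)"

definition turnout :: "('a \<Rightarrow> 'a \<Rightarrow> real) \<Rightarrow> 'a \<Rightarrow> 'a \<Rightarrow> real" where
  "turnout v x y = v x y + v y x"

definition margin :: "('a \<Rightarrow> 'a \<Rightarrow> real) \<Rightarrow> 'a \<Rightarrow> 'a \<Rightarrow> real" where
  "margin v x y = v x y - v y x"

text \<open>The order xi is given as a strict total order relation r on A: (x,y) in r means x precedes y.\<close>
definition imm_succ :: "'a rel \<Rightarrow> 'a \<Rightarrow> 'a \<Rightarrow> bool" where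
  "imm_succ r x y \<longleftrightarrow> (x, y) \<in> r \<and> \<not> (\<exists>z. (x, z) \<in> r \<and> (z, y) \<in> r)"

definition admissible_order :: "'a set \<Rightarrow> ('a \<Rightarrow> 'a \<Rightarrow> real) \<Rightarrow> 'a rel \<Rightarrow> bool" where
  "admissible_order A v r \<longleftrightarrow>
     r \<subseteq> A \<times> A \<and> strict_linear_order_on A r \<and>
     (\<forall>x y. (x, y) \<in> r \<longrightarrow> v x y \<ge> v y x) \<and>
     (\<forall>x y z. (x, y) \<in> r \<and> (y, z) \<in> r \<longrightarrow> v x z = max (v x y) (v y z)) \<and>
     (\<forall>x y z. (x, y) \<in> r \<and> (y, z) \<in> r \<longrightarrow> v z x = min (v z y) (v y x)) \<and>
     (\<forall>x x' z. imm_succ r x x' \<and> z \<in> A \<and> z \<noteq> x \<and> z \<noteq> x' \<longrightarrow>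
        0 \<le> turnout v x z - turnout v x' z \<and>
        turnout v x z - turnout v x' z \<le> margin v x x')"

definition has_CLC :: "'a set \<Rightarrow> ('a \<Rightarrow> 'a \<Rightarrow> real) \<Rightarrow> bool" where
  "has_CLC A v \<longleftrightarrow> (\<exists>r. admissible_order A v r)"

definition path_in :: "'a set \<Rightarrow> 'a \<Rightarrow> 'a \<Rightarrow> 'a list \<Rightarrow> bool" where
  "path_in A x y ps \<longleftrightarrow> length ps \<ge> 2 \<and> hd ps = x \<and> last ps = y \<and> set ps \<subseteq> A \<and>
     (\<forall>i. Suc i < length ps \<longrightarrow> ps ! i \<noteq> ps ! Suc i)"

definition path_strength :: "('a \<Rightarrow> 'a \<Rightarrow> real) \<Rightarrow> 'a list \<Rightarrow> real" where
  "path_strength w ps = Min (set (map (\<lambda>(a, b). w a b) (zip ps (tl ps))))"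

definition indirect :: "'a set \<Rightarrow> ('a \<Rightarrow> 'a \<Rightarrow> real) \<Rightarrow> 'a \<Rightarrow> 'a \<Rightarrow> real" where
  "indirect A w x y = Max {path_strength w ps | ps. path_in A x y ps}"

definition irr_rel :: "'a set \<Rightarrow> ('a \<Rightarrow> 'a \<Rightarrow> real) \<Rightarrow> 'a rel" where
  "irr_rel A w = {(x, y). x \<in> A \<and> y \<in> A \<and>
      (x = y \<or> (indirect A w x y > 0 \<and> indirect A w y x > 0))}"

definition irr_components :: "'a set \<Rightarrow> ('a \<Rightarrow> 'a \<Rightarrow> real) \<Rightarrow> 'a set set" where
  "irr_components A w = A // irr_rel A w"

definition dominates :: "'a set \<Rightarrow> ('a \<Rightarrow> 'a \<Rightarrow> real) \<Rightarrow> 'a \<Rightarrow> 'a \<Rightarrow> bool" where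
  "dominates A w x y \<longleftrightarrow> indirect A w x y > 0 \<and> indirect A w y x = 0"

definition comp_dominates :: "'a set \<Rightarrow> ('a \<Rightarrow> 'a \<Rightarrow> real) \<Rightarrow> 'a set \<Rightarrow> 'a set \<Rightarrow> bool" where
  "comp_dominates A w C D \<longleftrightarrow> (\<forall>x\<in>C. \<forall>y\<in>D. dominates A w x y)"

definition top_dominant :: "'a set \<Rightarrow> ('a \<Rightarrow> 'a \<Rightarrow> real) \<Rightarrow> 'a set \<Rightarrow> bool" where
  "top_dominant A w X \<longleftrightarrow> X \<in> irr_components A w \<and>
     (\<forall>D \<in> irr_components A w. D \<noteq> X \<longrightarrow> comp_dominates A w X D)"

end

theory Submission
  imports Defs
begin

text \<open>
  (1) For x < y and z \<notin> {x, y} put (a, b) = (v x z, v z x) and (a', b') = (v y z, v z y).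
  Whatever the position of z, the CLC conditions give a' \<le> a and b \<le> b', or b \<le> a and
  a' \<le> b'; either way a' b \<le> a b', which is exactly the comparison of the normalised scores.
  Indirect scores only see which links are positive, and q has the same positive links as v, so
  components and domination agree. If some x of the top component had v x y = 0, then y precedes
  x, and the elements above y that give y no vote form a set U containing x which no positive
  link leaves. Hence U contains the whole top component, and y, which votes positively for
  everything above it, would reach the top component by a positive path, contradicting domination.

  (2) Let a be the first element that gives zero vote to some later element. Condition (iv)
  forces zero votes to propagate from each element to its successor, so every element from a on
  gives zero vote to everything above it, and then also (again by (iv), applied to a and its
  successor) to everything below it. Below a all turnouts are positive by minimality of a.
\<close>

lemma list_exit_index:
  "ps \<noteq> [] \<Longrightarrow> hd ps \<in> U \<Longrightarrow> last ps \<notin> U \<Longrightarrow>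
   \<exists>i. Suc i < length ps \<and> ps ! i \<in> U \<and> ps ! Suc i \<notin> U"
proof (induction ps)
  case Nil
  then show ?case by simp
next
  case (Cons a ps)
  show ?case
  proof (cases "ps \<noteq> [] \<and> hd ps \<in> U")
    case True
    then obtain i where "Suc i < length ps" "ps ! i \<in> U" "ps ! Suc i \<notin> U"
      using Cons by auto
    then show ?thesis by (intro exI[of _ "Suc i"]) auto
  next
    case False
    with Cons show ?thesis by (cases ps) auto
  qed
qed

subsection \<open>Paths and indirect scores\<close>

lemma path_in_link_mem:
  assumes "path_in A x y ps" "Suc i < length ps"
  shows "(ps ! i, ps ! Suc i) \<in> set (zip ps (tl ps))"
  using assms unfolding in_set_zip by (intro exI[of _ i]) (auto simp: nth_tl path_in_def)

lemma path_in_link_props: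
  assumes "path_in A x y ps" "(a, b) \<in> set (zip ps (tl ps))"
  shows "a \<in> A" "b \<in> A" "a \<noteq> b"
proof -
  obtain i where "i < length (tl ps)" "a = ps ! i" "b = tl ps ! i"
    using assms(2) unfolding in_set_zip by auto
  then have "Suc i < length ps" "a = ps ! i" "b = ps ! Suc i"
    by (auto simp: nth_tl)
  then show "a \<in> A" "b \<in> A" "a \<noteq> b"
    using assms(1) unfolding path_in_def by (auto dest: nth_mem)
qed

lemma path_in_links_nonempty:
  "path_in A x y ps \<Longrightarrow> set (zip ps (tl ps)) \<noteq> {}"
  using path_in_link_mem[of A x y ps 0] by (auto simp: path_in_def)

lemma path_strength_eq_Min:
  "path_strength w ps = Min ((\<lambda>(a, b). w a b) ` set (zip ps (tl ps)))"
  unfolding path_strength_def by simp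

lemma path_strength_attained:
  assumes "path_in A x y ps"
  obtains a b where "a \<in> A" "b \<in> A" "a \<noteq> b" "path_strength w ps = w a b"
proof -
  have "path_strength w ps \<in> (\<lambda>(a, b). w a b) ` set (zip ps (tl ps))"
    unfolding path_strength_eq_Min using path_in_links_nonempty[OF assms] by (intro Min_in) auto
  then show ?thesis using that path_in_link_props[OF assms] by fastforce
qed

lemma path_strength_pos_iff:
  "path_in A x y ps \<Longrightarrow> path_strength w ps > 0 \<longleftrightarrow> (\<forall>(a, b) \<in> set (zip ps (tl ps)). w a b > 0)"
  unfolding path_strength_eq_Min by (subst Min_gr_iff) (auto dest: path_in_links_nonempty)

lemma path_strength_le_link:
  "path_in A x y ps \<Longrightarrow> Suc i < length ps \<Longrightarrow> path_strength w ps \<le> w (ps ! i) (ps ! Suc i)"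
  unfolding path_strength_eq_Min by (intro Min_le) (force dest: path_in_link_mem)+

lemma path_in_pair:
  "a \<in> A \<Longrightarrow> b \<in> A \<Longrightarrow> a \<noteq> b \<Longrightarrow> path_in A a b [a, b]"
  by (auto simp: path_in_def nth_Cons split: nat.splits)

lemma path_strength_pair: "path_strength w [a, b] = w a b"
  by (simp add: path_strength_def)

lemma finite_path_strengths:
  assumes "finite A"
  shows "finite {path_strength w ps | ps. path_in A x y ps}"
proof (rule finite_subset)
  show "{path_strength w ps | ps. path_in A x y ps} \<subseteq> (\<lambda>(a, b). w a b) ` (A \<times> A)"
    by (force elim: path_strength_attained)
qed (use assms in simp)

lemma path_strength_le_indirect:
  "finite A \<Longrightarrow> path_in A x y ps \<Longrightarrow> path_strength w ps \<le> indirect A w x y"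
  unfolding indirect_def by (intro Max_ge finite_path_strengths) auto

lemma le_indirect:
  "finite A \<Longrightarrow> a \<in> A \<Longrightarrow> b \<in> A \<Longrightarrow> a \<noteq> b \<Longrightarrow> w a b \<le> indirect A w a b"
  using path_strength_le_indirect[OF _ path_in_pair] path_strength_pair by metis

lemma indirect_pos_iff:
  assumes "finite A" "path_in A x y ps"
  shows "indirect A w x y > 0 \<longleftrightarrow> (\<exists>ps. path_in A x y ps \<and> path_strength w ps > 0)"
  unfolding indirect_def using finite_path_strengths[OF assms(1)] assms(2)
  by (subst Max_gr_iff) auto

lemma indirect_nonneg:
  assumes "finite A" "path_in A x y ps" "\<forall>a\<in>A. \<forall>b\<in>A. a \<noteq> b \<longrightarrow> w a b \<ge> 0"
  shows "indirect A w x y \<ge> 0"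
  using path_strength_le_indirect[OF assms(1,2), of w] assms(3)
  by (metis path_strength_attained[OF assms(2)] order_trans)

text \<open>A path leaving U has a link from U to its complement, and its strength is at most that link.\<close>
lemma indirect_le_0_if_no_exit:
  assumes "finite A" "u \<in> U" "U \<subseteq> A" "l \<in> A - U"
    and no_exit: "\<forall>a\<in>U. \<forall>b\<in>A - U. w a b \<le> 0"
  shows "indirect A w u l \<le> 0"
proof -
  have exit_bound: "path_strength w ps \<le> 0" if ps: "path_in A u l ps" for ps
  proof -
    have "ps \<noteq> []" "hd ps \<in> U" "last ps \<notin> U"
      using ps assms unfolding path_in_def by auto
    then obtain i where i: "Suc i < length ps" "ps ! i \<in> U" "ps ! Suc i \<notin> U"
      using list_exit_index by blast
    have "ps ! Suc i \<in> A"
      using ps i(1) unfolding path_in_def by (auto dest: nth_mem)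
    then have "w (ps ! i) (ps ! Suc i) \<le> 0"
      using no_exit i(2,3) by blast
    then show ?thesis
      using path_strength_le_link[OF ps i(1), of w] by linarith
  qed
  have "u \<in> A" "l \<in> A" "u \<noteq> l" using assms by auto
  then have "path_in A u l [u, l]" by (rule path_in_pair)
  then show ?thesis
    unfolding indirect_def using exit_bound finite_path_strengths[OF assms(1)]
    by (subst Max_le_iff) blast+
qed

lemma indirect_pos_cong:
  assumes "finite A"
    and same_pos: "\<forall>a\<in>A. \<forall>b\<in>A. a \<noteq> b \<longrightarrow> (w1 a b > 0 \<longleftrightarrow> w2 a b > 0)"
    and nonneg1: "\<forall>a\<in>A. \<forall>b\<in>A. a \<noteq> b \<longrightarrow> w1 a b \<ge> 0"
    and nonneg2: "\<forall>a\<in>A. \<forall>b\<in>A. a \<noteq> b \<longrightarrow> w2 a b \<ge> 0"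
  shows "indirect A w1 x y > 0 \<longleftrightarrow> indirect A w2 x y > 0"
    and "indirect A w1 x y = 0 \<longleftrightarrow> indirect A w2 x y = 0"
proof -
  have "(indirect A w1 x y > 0 \<longleftrightarrow> indirect A w2 x y > 0) \<and>
        (indirect A w1 x y = 0 \<longleftrightarrow> indirect A w2 x y = 0)"
  proof (cases "\<exists>ps. path_in A x y ps")
    case True
    then obtain ps where ps: "path_in A x y ps" by blast
    have "path_strength w1 qs > 0 \<longleftrightarrow> path_strength w2 qs > 0" if "path_in A x y qs" for qs
      using path_strength_pos_iff[OF that] path_in_link_props[OF that] same_pos by fastforce
    then have "indirect A w1 x y > 0 \<longleftrightarrow> indirect A w2 x y > 0"
      using indirect_pos_iff[OF assms(1) ps] by blast
    moreover have "indirect A w1 x y \<ge> 0" "indirect A w2 x y \<ge> 0"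
      using indirect_nonneg[OF assms(1) ps] nonneg1 nonneg2 by auto
    ultimately show ?thesis by linarith
  next
    case False
    then show ?thesis by (simp add: indirect_def)
  qed
  then show "indirect A w1 x y > 0 \<longleftrightarrow> indirect A w2 x y > 0"
    and "indirect A w1 x y = 0 \<longleftrightarrow> indirect A w2 x y = 0" by blast+
qed

lemma top_dominant_pos_cong:
  assumes "finite A"
    and "\<forall>a\<in>A. \<forall>b\<in>A. a \<noteq> b \<longrightarrow> (w1 a b > 0 \<longleftrightarrow> w2 a b > 0)"
    and "\<forall>a\<in>A. \<forall>b\<in>A. a \<noteq> b \<longrightarrow> w1 a b \<ge> 0"
    and "\<forall>a\<in>A. \<forall>b\<in>A. a \<noteq> b \<longrightarrow> w2 a b \<ge> 0"
  shows "top_dominant A w1 X \<longleftrightarrow> top_dominant A w2 X"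
proof -
  note cong = indirect_pos_cong[OF assms]
  have "irr_rel A w1 = irr_rel A w2"
    unfolding irr_rel_def using cong by auto
  moreover have "dominates A w1 = dominates A w2"
    unfolding dominates_def using cong by (intro ext) blast
  ultimately show ?thesis
    unfolding top_dominant_def irr_components_def comp_dominates_def by simp
qed

lemma top_dominant_subset: "top_dominant A w X \<Longrightarrow> X \<subseteq> A"
  unfolding top_dominant_def irr_components_def irr_rel_def by (auto elim: quotientE)

lemma frac_le_frac_of_cross_le:
  fixes a b a' b' :: real
  assumes "a' * b \<le> a * b'" "a + b > 0" "a' + b' > 0"
  shows "a' / (a' + b') \<le> a / (a + b)" and "b / (a + b) \<le> b' / (a' + b')"
  using assms by (simp_all add: divide_simps algebra_simps)

subsection \<open>Matrices with CLC structure\<close>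

locale clc_matrix =
  fixes A :: "'a set" and v :: "'a \<Rightarrow> 'a \<Rightarrow> real" and r :: "'a rel"
  assumes finite: "finite A" and llull: "llull A v" and admissible: "admissible_order A v r"
begin

lemma order_in_A: "(x, y) \<in> r \<Longrightarrow> x \<in> A \<and> y \<in> A"
  using admissible unfolding admissible_order_def by auto

lemma strict_order: "strict_linear_order_on A r"
  using admissible unfolding admissible_order_def by blast

lemma order_irrefl: "(x, x) \<notin> r"
  using strict_order unfolding strict_linear_order_on_def irrefl_def by auto

lemma order_trans: "(x, y) \<in> r \<Longrightarrow> (y, z) \<in> r \<Longrightarrow> (x, z) \<in> r"
  using strict_order unfolding strict_linear_order_on_def trans_def by blast

lemma order_total: "x \<in> A \<Longrightarrow> y \<in> A \<Longrightarrow> x \<noteq> y \<Longrightarrow> (x, y) \<in> r \<or> (y, x) \<in> r"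
  using strict_order unfolding strict_linear_order_on_def total_on_def by blast

lemma votes_forward: "(x, y) \<in> r \<Longrightarrow> v y x \<le> v x y"
  using admissible unfolding admissible_order_def by blast

lemma votes_max: "(x, y) \<in> r \<Longrightarrow> (y, z) \<in> r \<Longrightarrow> v x z = max (v x y) (v y z)"
  using admissible unfolding admissible_order_def by blast

lemma votes_min: "(x, y) \<in> r \<Longrightarrow> (y, z) \<in> r \<Longrightarrow> v z x = min (v z y) (v y x)"
  using admissible unfolding admissible_order_def by blast

lemma turnout_succ_le:
  "imm_succ r x x' \<Longrightarrow> z \<in> A \<Longrightarrow> z \<noteq> x \<Longrightarrow> z \<noteq> x' \<Longrightarrow> turnout v x' z \<le> turnout v x z"
  using admissible unfolding admissible_order_def by fastforce

lemma turnout_succ_diff_le_margin: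
  "imm_succ r x x' \<Longrightarrow> z \<in> A \<Longrightarrow> z \<noteq> x \<Longrightarrow> z \<noteq> x' \<Longrightarrow>
   turnout v x z - turnout v x' z \<le> margin v x x'"
  using admissible unfolding admissible_order_def by blast

lemma votes_nonneg: "x \<in> A \<Longrightarrow> y \<in> A \<Longrightarrow> x \<noteq> y \<Longrightarrow> 0 \<le> v x y"
  using llull unfolding llull_def by blast

lemma votes_nonneg_order: "(x, y) \<in> r \<Longrightarrow> 0 \<le> v x y" "(x, y) \<in> r \<Longrightarrow> 0 \<le> v y x"
  using votes_nonneg order_in_A order_irrefl by metis+

lemma wf_order: "wf r" and wf_order_converse: "wf (r\<inverse>)"
proof -
  have "r \<subseteq> A \<times> A" using admissible unfolding admissible_order_def by blast
  then have "finite r" using finite finite_subset by blast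
  moreover have "acyclic r"
    using order_irrefl trancl_id[of r] order_trans
    unfolding acyclic_irrefl irrefl_def trans_def by metis
  ultimately show "wf r" "wf (r\<inverse>)"
    using finite_acyclic_wf finite_acyclic_wf_converse by blast+
qed

lemma imm_succ_in_order: "imm_succ r x y \<Longrightarrow> (x, y) \<in> r"
  unfolding imm_succ_def by blast

lemma exists_imm_succ:
  assumes "(x, d) \<in> r"
  obtains x' where "imm_succ r x x'"
proof -
  let ?B = "{y. (x, y) \<in> r}"
  obtain m where m: "m \<in> ?B" "\<And>y. (y, m) \<in> r \<Longrightarrow> y \<notin> ?B"
    using wf_order[unfolded wf_eq_minimal, rule_format, of d ?B] assms by auto
  then have "imm_succ r x m" unfolding imm_succ_def by blast
  then show ?thesis using that by blast
qed

lemma exists_imm_pred: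
  assumes "(c, d) \<in> r"
  obtains p where "imm_succ r p d" "(c, p) \<in> r\<^sup>="
proof -
  let ?B = "{y. (y, d) \<in> r \<and> (c, y) \<in> r\<^sup>=}"
  obtain m where m: "m \<in> ?B" "\<And>y. (m, y) \<in> r \<Longrightarrow> y \<notin> ?B"
    using wf_order_converse[unfolded wf_eq_minimal, rule_format, of c ?B] assms by auto
  have "imm_succ r m d"
    unfolding imm_succ_def using m order_trans by blast
  then show ?thesis using m that by blast
qed

lemma no_exit_from_zero_column:
  fixes y
  defines "U \<equiv> {u \<in> A. (y, u) \<in> r \<and> v u y = 0}"
  assumes "y \<in> A" "u \<in> U" "l \<in> A - U"
  shows "v u l = 0"
proof -
  have u: "u \<in> A" "(y, u) \<in> r" "v u y = 0" and "u \<noteq> l"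
    using assms unfolding U_def by auto
  consider "l = y" | "(l, y) \<in> r" | "(y, l) \<in> r" "(l, u) \<in> r" | "(y, l) \<in> r" "(u, l) \<in> r"
    using order_total assms(2,4) u(1) \<open>u \<noteq> l\<close> by blast
  then show ?thesis
  proof cases
    case 1
    then show ?thesis using u by simp
  next
    case 2
    then show ?thesis using votes_min[OF 2 u(2)] u(3) votes_nonneg_order(2)[OF 2] by simp
  next
    case 3
    then have "v l y > 0"
      using assms(4) votes_nonneg_order(2)[OF 3(1)] unfolding U_def by force
    then show ?thesis
      using votes_min[OF 3] u(3) votes_nonneg[of u l] u(1) assms(4) \<open>u \<noteq> l\<close>
      by (auto simp: min_def split: if_splits)
  next
    case 4
    then have "v l y > 0"
      using assms(4) votes_nonneg_order(2)[OF 4(1)] unfolding U_def by force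
    then show ?thesis using votes_min[OF u(2) 4(2)] u(3) by (simp add: min_def split: if_splits)
  qed
qed

text \<open>The turnout of c'' against c is squeezed by (iv) below that of c' against c, which is 0.\<close>
lemma zero_vote_succ_propagates:
  assumes succ1: "imm_succ r c c'" and succ2: "imm_succ r c' c''" and zero: "v c c' = 0"
  shows "v c' c'' = 0"
proof -
  have r1: "(c, c') \<in> r" and r2: "(c', c'') \<in> r"
    using succ1 succ2 imm_succ_in_order by auto
  have r3: "(c, c'') \<in> r" using order_trans r1 r2 .
  have "v c' c = 0"
    using votes_forward[OF r1] zero votes_nonneg_order(2)[OF r1] by simp
  moreover have "turnout v c'' c \<le> turnout v c' c"
    using turnout_succ_le[OF succ2] order_in_A[OF r1] r1 r3 order_irrefl by blast
  moreover have "v c c'' = v c' c''"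
    using votes_max[OF r1 r2] zero votes_nonneg_order(1)[OF r2] by simp
  ultimately show ?thesis
    using zero votes_nonneg_order[OF r2] votes_nonneg_order(2)[OF r3]
    by (simp add: turnout_def)
qed

context
  fixes a d
  assumes a_d: "(a, d) \<in> r" and zero_a_d: "v a d = 0"
begin

lemma zero_vote_to_succ_from:
  "(a, c) \<in> r\<^sup>= \<Longrightarrow> imm_succ r c c' \<Longrightarrow> v c c' = 0"
proof (induction c arbitrary: c' rule: wf_induct_rule[OF wf_order])
  case (1 c)
  show ?case
  proof (cases "c = a")
    case True
    have a_c': "(a, c') \<in> r" using 1(3) True imm_succ_in_order by blast
    have "(c', d) \<in> r\<^sup>="
      using 1(3) True a_d order_total order_in_A imm_succ_in_order
      unfolding imm_succ_def by (metis Un_iff pair_in_Id_conv)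
    then show ?thesis
      using votes_max[OF a_c'] votes_nonneg_order(1)[OF a_c'] zero_a_d True
      by (cases "c' = d") (auto simp: max_def split: if_splits)
  next
    case False
    then obtain p where "imm_succ r p c" "(a, p) \<in> r\<^sup>="
      using 1(2) exists_imm_pred by blast
    then show ?thesis
      using 1 zero_vote_succ_propagates imm_succ_in_order by blast
  qed
qed

lemma zero_vote_upward_from:
  "(a, c) \<in> r\<^sup>= \<Longrightarrow> (c, e) \<in> r \<Longrightarrow> v c e = 0"
proof (induction e arbitrary: c rule: wf_induct_rule[OF wf_order])
  case (1 e)
  obtain p where p: "imm_succ r p e" "(c, p) \<in> r\<^sup>="
    using exists_imm_pred[OF 1(3)] by blast
  show ?case
  proof (cases "p = c")
    case True
    then show ?thesis using zero_vote_to_succ_from 1(2) p(1) by blast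
  next
    case False
    then have cp: "(c, p) \<in> r" using p(2) by blast
    have "v c p = 0" using 1 p(1) imm_succ_in_order cp by blast
    moreover have "v p e = 0"
      using zero_vote_to_succ_from p(1) 1(2) cp order_trans by blast
    ultimately show ?thesis using votes_max[OF cp imm_succ_in_order[OF p(1)]] by simp
  qed
qed

text \<open>With a' the successor of a, both a a' and a' a vanish, so (iv) gives equal turnouts of
  a and a' against x, while v x a' = v x a and v a' x = 0 by (ii) and (iii).\<close>
lemma zero_vote_downward:
  assumes "(x, a) \<in> r"
  shows "v a x = 0"
proof -
  obtain a' where succ: "imm_succ r a a'" using exists_imm_succ[OF a_d] by blast
  have a_a': "(a, a') \<in> r" using succ imm_succ_in_order by blast
  have "v a a' = 0" using zero_vote_upward_from a_a' by blast
  moreover have "v a' a = 0"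
    using votes_forward[OF a_a'] calculation votes_nonneg_order(2)[OF a_a'] by simp
  moreover have "x \<in> A" "x \<noteq> a" "x \<noteq> a'"
    using assms order_in_A order_irrefl order_trans[OF assms a_a'] by auto
  ultimately have "turnout v a x = turnout v a' x"
    using turnout_succ_le[OF succ] turnout_succ_diff_le_margin[OF succ]
    by (force simp: margin_def)
  moreover have "v a' x = 0"
    using votes_min[OF assms a_a'] \<open>v a' a = 0\<close> votes_nonneg_order(2)[OF assms] by simp
  moreover have "v x a' = v x a"
    using votes_max[OF assms a_a'] \<open>v a a' = 0\<close> votes_nonneg_order(1)[OF assms] by simp
  ultimately show ?thesis by (simp add: turnout_def)
qed

lemma zero_votes_from_upper_set:
  assumes "(a, y) \<in> r\<^sup>=" "x \<in> A" "x \<noteq> y"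
  shows "v y x = 0"
proof -
  have "y \<in> A" "a \<in> A" using assms(1) order_in_A a_d by auto
  consider "(y, x) \<in> r" | "(x, y) \<in> r" "(a, x) \<in> r\<^sup>=" | "(x, a) \<in> r" "(x, y) \<in> r"
    using order_total assms \<open>y \<in> A\<close> \<open>a \<in> A\<close> order_trans by blast
  then show ?thesis
  proof cases
    case 1
    then show ?thesis using zero_vote_upward_from assms(1) by blast
  next
    case 2
    then show ?thesis
      using zero_vote_upward_from votes_forward votes_nonneg_order(2) by (metis order.antisym)
  next
    case 3
    show ?thesis
    proof (cases "y = a")
      case True
      then show ?thesis using zero_vote_downward 3 by simp
    next
      case False
      then have a_y: "(a, y) \<in> r" using assms(1) by blast
      have "v y a = 0"
        using zero_vote_upward_from[of a y] a_y votes_forward[OF a_y] votes_nonneg_order(2)[OF a_y]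
        by simp
      then show ?thesis
        using votes_min[OF 3(1) a_y] zero_vote_downward[OF 3(1)] by simp
    qed
  qed
qed

end

lemma turnout_zero_tail:
  assumes "\<exists>x\<in>A. \<exists>y\<in>A. x \<noteq> y \<and> turnout v x y = 0"
  shows "\<exists>Y\<subseteq>A. (\<forall>x\<in>A - Y. \<forall>x'\<in>A - Y. x \<noteq> x' \<longrightarrow> turnout v x x' > 0) \<and>
                 (\<forall>y\<in>Y. \<forall>x\<in>A. x \<noteq> y \<longrightarrow> v y x = 0)"
proof -
  let ?Z = "{c. \<exists>d. (c, d) \<in> r \<and> v c d = 0}"
  have zero_pair: "x \<in> ?Z \<or> y \<in> ?Z" if "x \<in> A" "y \<in> A" "x \<noteq> y" "turnout v x y = 0" for x y
    using that votes_nonneg[of x y] votes_nonneg[of y x] order_total[of x y]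
    by (auto simp: turnout_def)
  then obtain z where "z \<in> ?Z" using assms by blast
  then obtain a where a: "a \<in> ?Z" and first: "\<And>c. (c, a) \<in> r \<Longrightarrow> c \<notin> ?Z"
    using wf_order[unfolded wf_eq_minimal, rule_format, of z ?Z] by blast
  obtain d where a_d: "(a, d) \<in> r" "v a d = 0" using a by blast
  have "a \<in> A" using order_in_A a_d by blast
  define Y where "Y = {y \<in> A. (a, y) \<in> r\<^sup>=}"
  show ?thesis
  proof (intro exI[of _ Y] conjI ballI impI)
    fix x x' assume "x \<in> A - Y" "x' \<in> A - Y" "x \<noteq> x'"
    moreover have "(x, a) \<in> r" "(x', a) \<in> r"
      using calculation order_total \<open>a \<in> A\<close> unfolding Y_def by auto
    ultimately show "turnout v x x' > 0"
      using zero_pair[of x x'] first votes_nonneg[of x x'] votes_nonneg[of x' x]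
      by (force simp: turnout_def)
  next
    fix y x assume "y \<in> Y" "x \<in> A" "x \<noteq> y"
    then show "v y x = 0"
      using zero_votes_from_upper_set[OF a_d] unfolding Y_def by blast
  qed (auto simp: Y_def)
qed

end

subsection \<open>Positive turnouts\<close>

definition relative_score :: "('a \<Rightarrow> 'a \<Rightarrow> real) \<Rightarrow> 'a \<Rightarrow> 'a \<Rightarrow> real" where
  "relative_score v x y = v x y / turnout v x y"

locale clc_matrix_pos_turnout = clc_matrix +
  assumes turnout_pos: "\<forall>x\<in>A. \<forall>y\<in>A. x \<noteq> y \<longrightarrow> turnout v x y > 0"
begin

abbreviation q where "q \<equiv> relative_score v"

lemma votes_forward_pos: "(x, y) \<in> r \<Longrightarrow> v x y > 0"
  using turnout_pos order_in_A order_irrefl votes_forward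
  by (fastforce simp: turnout_def)

lemma relative_score_forward: "(x, y) \<in> r \<Longrightarrow> q y x \<le> q x y"
  using votes_forward turnout_pos order_in_A order_irrefl
  by (fastforce simp: relative_score_def turnout_def add.commute intro: divide_right_mono)

lemma relative_score_mono:
  assumes x_y: "(x, y) \<in> r" and z: "z \<in> A" "z \<noteq> x" "z \<noteq> y"
  shows "q y z \<le> q x z" and "q z x \<le> q z y"
proof -
  have "x \<in> A" "y \<in> A" using order_in_A x_y by auto
  then have pos: "v x z + v z x > 0" "v y z + v z y > 0"
    and nonneg: "0 \<le> v x z" "0 \<le> v z x" "0 \<le> v y z" "0 \<le> v z y"
    using turnout_pos votes_nonneg z unfolding turnout_def by auto
  consider "(z, x) \<in> r" | "(x, z) \<in> r" "(z, y) \<in> r" | "(y, z) \<in> r"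
    using order_total \<open>x \<in> A\<close> \<open>y \<in> A\<close> z by blast
  then have "(v y z \<le> v x z \<and> v z x \<le> v z y) \<or> (v z x \<le> v x z \<and> v y z \<le> v z y)"
  proof cases
    case 1
    then show ?thesis using votes_max[OF 1 x_y] votes_min[OF 1 x_y] by auto
  next
    case 2
    then show ?thesis using votes_forward by blast
  next
    case 3
    then show ?thesis using votes_max[OF x_y 3] votes_min[OF x_y 3] by auto
  qed
  then have "v y z * v z x \<le> v x z * v z y"
    using mult_mono[of "v y z" "v x z" "v z x" "v z y"] mult_mono[of "v y z" "v z y" "v z x" "v x z"]
      nonneg by (auto simp: mult.commute)
  then show "q y z \<le> q x z" and "q z x \<le> q z y"
    using frac_le_frac_of_cross_le[OF _ pos] 
    by (simp_all add: relative_score_def turnout_def add.commute)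
qed

lemma relative_score_pos_iff: "x \<in> A \<Longrightarrow> y \<in> A \<Longrightarrow> x \<noteq> y \<Longrightarrow> q x y > 0 \<longleftrightarrow> v x y > 0"
  using turnout_pos by (force simp: relative_score_def zero_less_divide_iff)

lemma top_dominant_relative_score_iff: "top_dominant A q X \<longleftrightarrow> top_dominant A v X"
  using finite votes_nonneg turnout_pos relative_score_pos_iff
  by (intro top_dominant_pos_cong) (auto simp: relative_score_def less_imp_le)

lemma top_dominant_votes_pos:
  assumes X: "top_dominant A v X" and "x \<in> X" "y \<in> A" "y \<noteq> x"
  shows "v x y > 0"
proof (rule ccontr)
  let ?R = "irr_rel A v"
  assume not_pos: "\<not> v x y > 0"
  obtain a where a: "a \<in> A" "X = ?R `` {a}"
    using X unfolding top_dominant_def irr_components_def by (blast elim: quotientE)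
  have "x \<in> A" "(a, x) \<in> ?R" "a \<in> X" using a \<open>x \<in> X\<close> unfolding irr_rel_def by auto
  have y_x: "(y, x) \<in> r"
    using votes_forward_pos not_pos order_total \<open>x \<in> A\<close> assms(3,4) by blast
  define U where "U = {u \<in> A. (y, u) \<in> r \<and> v u y = 0}"
  have "x \<in> U" "y \<notin> U" "U \<subseteq> A"
    using y_x not_pos votes_nonneg[of x y] \<open>x \<in> A\<close> assms(3,4) order_irrefl
    unfolding U_def by auto
  have no_exit: "\<forall>u\<in>U. \<forall>l\<in>A - U. v u l \<le> 0"
    using no_exit_from_zero_column[OF assms(3)] unfolding U_def by simp
  have stuck: "\<not> indirect A v u l > 0" if "u \<in> U" "l \<in> A - U" for u l
    using indirect_le_0_if_no_exit[OF finite that(1) \<open>U \<subseteq> A\<close> that(2) no_exit] by linarith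
  show False
  proof (cases "a \<in> U")
    case False
    then show False
      using stuck[of x a] \<open>x \<in> U\<close> \<open>(a, x) \<in> ?R\<close> a(1) unfolding irr_rel_def by auto
  next
    case True
    let ?D = "?R `` {y}"
    have "y \<in> ?D" using assms(3) unfolding irr_rel_def by simp
    moreover have "y \<notin> X"
    proof
      assume "y \<in> X"
      then have "indirect A v a y > 0"
        using a(2) True \<open>y \<notin> U\<close> unfolding irr_rel_def by auto
      then show False using stuck[of a y] True \<open>y \<notin> U\<close> assms(3) by blast
    qed
    moreover have "?D \<in> irr_components A v"
      using assms(3) unfolding irr_components_def by (rule quotientI)
    ultimately have "dominates A v a y"
      using X \<open>a \<in> X\<close> unfolding top_dominant_def comp_dominates_def by blast
    moreover have "(y, a) \<in> r" using True unfolding U_def by blast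
    then have "0 < indirect A v y a"
      using votes_forward_pos le_indirect[OF finite] order_in_A order_irrefl
      by (metis less_le_trans)
    ultimately show False unfolding dominates_def by simp
  qed
qed

lemma top_dominant_relative_score_pos:
  "top_dominant A v X \<Longrightarrow> x \<in> X \<Longrightarrow> y \<in> A \<Longrightarrow> y \<noteq> x \<Longrightarrow> q x y > 0"
  using top_dominant_votes_pos relative_score_pos_iff top_dominant_subset by blast

end

theorem proposition3p6:
  fixes A :: "'a set" and v :: "'a \<Rightarrow> 'a \<Rightarrow> real" and r :: "'a rel"
  assumes "finite A" and "llull A v" and "admissible_order A v r"
  shows "((\<forall>x\<in>A. \<forall>y\<in>A. x \<noteq> y \<longrightarrow> turnout v x y > 0) \<longrightarrow>
           (let q = (\<lambda>x y. v x y / turnout v x y) in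
             (\<forall>x y. (x, y) \<in> r \<longrightarrow> q x y \<ge> q y x) \<and>
             (\<forall>x y z. (x, y) \<in> r \<and> z \<in> A \<and> z \<noteq> x \<and> z \<noteq> y \<longrightarrow>
                q x z \<ge> q y z \<and> q z x \<le> q z y) \<and>
             (\<forall>X. top_dominant A v X \<longrightarrow>
                top_dominant A q X \<and> (\<forall>x\<in>X. \<forall>y\<in>A. y \<noteq> x \<longrightarrow> q x y > 0))))
       \<and> ((\<exists>x\<in>A. \<exists>y\<in>A. x \<noteq> y \<and> turnout v x y = 0) \<longrightarrow>
           (\<exists>Y\<subseteq>A. (\<forall>x\<in>A - Y. \<forall>x'\<in>A - Y. x \<noteq> x' \<longrightarrow> turnout v x x' > 0) \<and>
                    (\<forall>y\<in>Y. \<forall>x\<in>A. x \<noteq> y \<longrightarrow> v y x = 0)))"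
proof -
  interpret clc_matrix A v r using assms by unfold_locales
  have q: "(\<lambda>x y. v x y / turnout v x y) = relative_score v"
    by (simp add: relative_score_def fun_eq_iff)
  show ?thesis
  proof (intro conjI impI, goal_cases)
    case 1
    then interpret clc_matrix_pos_turnout A v r by unfold_locales
    show ?case
      unfolding Let_def q
      by (intro conjI allI impI ballI; (elim conjE)?)
        (simp_all add: relative_score_forward relative_score_mono top_dominant_relative_score_iff
          top_dominant_relative_score_pos)
  next
    case 2
    then show ?case by (rule turnout_zero_tail)
  qed
qed

end
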